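(* Assume the standing assumptions and let $f$ satisfy (F). Let $\tilde s$ be the solution of the linearized equation below and $u$ the solution of the discrete heat problem $\partial_tu=\Delta_hu$ on $(0,T]\times\Omega_h^+$, $u(0,\cdot)=0$, $u(t,0)=\psi(t)$. Then $\tilde v:=\tilde s-u$ satisfies $\|\tilde v\|_{L^\infty([0,T]\times\Omega_h^+)}\le2\eta$.
   Context: Discrete setting: $h>0$, $\Omega_h^+=\{h,2h,\dots\}$, $\Omega_{h,0}^+=\Omega_h^+\cup\{0\}$, $\|f\|_{L^p(\Omega_h^+)}=(h\sum_{z\in\Omega_h^+}|f(z)|^p)^{1/p}$, $D^\pm_h$ the forward/backward differences $D^+_hf(x)=\frac{f(x+h)-f(x)}{h}$, $D^-_hf(x)=\frac{f(x)-f(x-h)}{h}$, $\Delta_h=D^+_hD^-_h$. Standing assumptions: $A=1$, $B\in\{-1,1\}$, $\varphi(c)=A+Bc$, $\lambda>0$, $T>0$, $\eta>0$; $\psi\in C^\beta([0,T])$ for some $\beta\in(1/4,1/2)$, $0\le\psi\le\eta$, $\psi(0)=0$; $0\le s_0\le\eta$, $s_0(0)=0$, $s_0,D^+_hs_0\in L^2(\Omega_h^+)$; $0<c_m\le c_0\le C_0$, $C_0-c_0,D^+_hc_0\in L^2(\Omega_h^+)$; $0<\varphi_{\min}\le\varphi(c)\le\varphi_{\max}$ for $c\in[0,C_0]$; if $B=1$ then $\eta<1$. Conditions (F) on Borel $f:[0,T]\times\Omega_{h,0}^+\to\mathbb{R}$: $f\in C([0,T],L^2(\Omega_h^+))$,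 $\sup_t\|f(t)\|^2_{L^2}+\int_0^T\|D^+_hf\|^2_{L^2}dt\le K$ for some $K>0$, $f(t,0)=\psi(t)$, $0\le f\le\eta$. Linearized equation: with $g=Ac_0[\varphi(c_0)e^{\lambda A\int_0^tf\,d\tau}-Bc_0]^{-1}$, $b_g=\frac{B}{2(A+Bg)}$, $\gamma_g=\lambda g$, $\tilde s$ is the bounded solution of $\partial_t\tilde s=\Delta_h\tilde s+b_g[D^+_hgD^+_h\tilde s+D^-_hgD^-_h\tilde s]+\gamma_g\tilde s(Bf-1)$ on $(0,T]\times\Omega_h^+$, $\tilde s(0,\cdot)=s_0$, $\tilde s(t,0)=\psi(t)$. *)

theory Defs
  imports "HOL-Analysis.Analysis"
begin

text \<open>Grid functions on \<Omega>_{h,0}^+ = {0,h,2h,...} are represented as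
  functions nat \<Rightarrow> real, with index k standing for the point k*h.\<close>

definition Dplus :: "real \<Rightarrow> (nat \<Rightarrow> real) \<Rightarrow> nat \<Rightarrow> real" where
  "Dplus h v k = (v (Suc k) - v k) / h"

definition Dminus :: "real \<Rightarrow> (nat \<Rightarrow> real) \<Rightarrow> nat \<Rightarrow> real" where
  "Dminus h v k = (v k - v (k - 1)) / h"

definition Lap :: "real \<Rightarrow> (nat \<Rightarrow> real) \<Rightarrow> nat \<Rightarrow> real" where
  "Lap h v k = Dplus h (Dminus h v) k"

text \<open>Squared L^2(\<Omega>_h^+) norm, h * sum over z = h, 2h, ... of |v z|^2,
  valued in ennreal (infinite iff v is not in L^2).\<close>
definition l2sq :: "real \<Rightarrow> (nat \<Rightarrow> real) \<Rightarrow> ennreal" where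
  "l2sq h v = ennreal h * (\<Sum>k. ennreal ((v (Suc k))\<^sup>2))"

definition holder_on :: "real \<Rightarrow> real set \<Rightarrow> (real \<Rightarrow> real) \<Rightarrow> bool" where
  "holder_on \<beta> S \<psi> \<longleftrightarrow> continuous_on S \<psi> \<and>
     (\<exists>M. \<forall>t\<in>S. \<forall>s\<in>S. \<bar>\<psi> t - \<psi> s\<bar> \<le> M * \<bar>t - s\<bar> powr \<beta>)"

definition condF :: "real \<Rightarrow> real \<Rightarrow> real \<Rightarrow> real \<Rightarrow> (real \<Rightarrow> real) \<Rightarrow> (real \<Rightarrow> nat \<Rightarrow> real) \<Rightarrow> bool" where
  "condF h T \<eta> K \<psi> f \<longleftrightarrow>
     K > 0 \<and>
     (\<forall>k. (\<lambda>t. f t k) \<in> borel_measurable (restrict_space lborel {0..T})) \<and>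
     (\<forall>t\<in>{0..T}. l2sq h (f t) < \<infinity>) \<and>
     (\<forall>t\<in>{0..T}. ((\<lambda>s. l2sq h (\<lambda>k. f s k - f t k)) \<longlongrightarrow> 0) (at t within {0..T})) \<and>
     (\<forall>t\<in>{0..T}. l2sq h (f t) +
        (\<integral>\<^sup>+ \<tau>. l2sq h (Dplus h (f \<tau>)) * indicator {0..T} \<tau> \<partial>lborel) \<le> ennreal K) \<and>
     (\<forall>t\<in>{0..T}. f t 0 = \<psi> t) \<and>
     (\<forall>t\<in>{0..T}. \<forall>k. 0 \<le> f t k \<and> f t k \<le> \<eta>)"

text \<open>The coefficient g (with A = 1, \<phi>(c) = 1 + B c) and b_g, \<gamma>_g.\<close>
definition gcoef :: "real \<Rightarrow> real \<Rightarrow> (nat \<Rightarrow> real) \<Rightarrow> (real \<Rightarrow> nat \<Rightarrow> real) \<Rightarrow> real \<Rightarrow> nat \<Rightarrow> real" where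
  "gcoef B lam c0 f t k =
     c0 k / ((1 + B * c0 k) * exp (lam * integral {0..t} (\<lambda>\<tau>. f \<tau> k)) - B * c0 k)"

definition bcoef :: "real \<Rightarrow> real \<Rightarrow> real" where
  "bcoef B g = B / (2 * (1 + B * g))"

definition is_lin_solution ::
  "real \<Rightarrow> real \<Rightarrow> real \<Rightarrow> real \<Rightarrow> (nat \<Rightarrow> real) \<Rightarrow> (real \<Rightarrow> nat \<Rightarrow> real) \<Rightarrow>
   (real \<Rightarrow> real) \<Rightarrow> (nat \<Rightarrow> real) \<Rightarrow> (real \<Rightarrow> nat \<Rightarrow> real) \<Rightarrow> bool" where
  "is_lin_solution h T B lam c0 f \<psi> s0 s \<longleftrightarrow>
     (let g = gcoef B lam c0 f in
     (\<forall>k. continuous_on {0..T} (\<lambda>t. s t k)) \<and>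
     (\<exists>M. \<forall>t\<in>{0..T}. \<forall>k. \<bar>s t k\<bar> \<le> M) \<and>
     (\<forall>k. s 0 k = s0 k) \<and>
     (\<forall>t\<in>{0..T}. s t 0 = \<psi> t) \<and>
     (\<forall>t\<in>{0<..T}. \<forall>k\<ge>1.
        ((\<lambda>\<tau>. s \<tau> k) has_real_derivative
           (Lap h (s t) k
            + bcoef B (g t k) * (Dplus h (g t) k * Dplus h (s t) k + Dminus h (g t) k * Dminus h (s t) k)
            + lam * g t k * s t k * (B * f t k - 1)))
        (at t within {0..T})))"

definition is_heat_solution ::
  "real \<Rightarrow> real \<Rightarrow> (real \<Rightarrow> real) \<Rightarrow> (real \<Rightarrow> nat \<Rightarrow> real) \<Rightarrow> bool" where
  "is_heat_solution h T \<psi> u \<longleftrightarrow>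
     (\<forall>k. continuous_on {0..T} (\<lambda>t. u t k)) \<and>
     (\<exists>M. \<forall>t\<in>{0..T}. \<forall>k. \<bar>u t k\<bar> \<le> M) \<and>
     (\<forall>k\<ge>1. u 0 k = 0) \<and>
     (\<forall>t\<in>{0..T}. u t 0 = \<psi> t) \<and>
     (\<forall>t\<in>{0<..T}. \<forall>k\<ge>1.
        ((\<lambda>\<tau>. u \<tau> k) has_real_derivative Lap h (u t) k) (at t within {0..T}))"

end

theory Submission
  imports Defs
begin

(* Both s and u take values in [0, eta], so |s - u| <= eta.  Each solves a semi-discrete equation
   w_k' = a (w_(k+1) - w_k) + c (w_(k-1) - w_k) + z  with  0 <= a <= A  and  0 <= c,  for which a
   maximum principle holds on the half-line for bounded solutions.  For the linearised equation the
   operator Lap + b_g (D+g D+ + D-g D-) has this form with weights that are nonnegative because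
   1 + B g >= min 1 phi_min > 0, and the reaction term lam g s (B f - 1) points back into [0, eta]
   because B f <= 1. *)

lemma has_real_derivative_nonneg_at_left_max:
  fixes f :: "real \<Rightarrow> real"
  assumes x: "a < x" "x \<le> b"
    and der: "(f has_real_derivative D) (at x within {a..b})"
    and left_max: "\<And>y. a \<le> y \<Longrightarrow> y < x \<Longrightarrow> f y \<le> f x"
  shows "0 \<le> D"
proof -
  have "(f has_real_derivative D) (at x within {a..x})"
    using has_field_derivative_subset[OF der] x by auto
  then have lim: "((\<lambda>y. (f y - f x) / (y - x)) \<longlongrightarrow> D) (at_left x)"
    using at_within_Icc_at_left[OF x(1)] by (simp add: has_field_derivative_iff)
  have "eventually (\<lambda>y. 0 \<le> (f y - f x) / (y - x)) (at_left x)"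
    using eventually_at_left_real[OF x(1)]
    by eventually_elim (auto intro!: divide_nonpos_neg left_max)
  then show ?thesis
    using tendsto_lowerbound[OF lim] by simp
qed

lemma first_touching_time:
  fixes W :: "real \<Rightarrow> nat \<Rightarrow> real"
  assumes cont: "\<And>k. continuous_on {0..T} (\<lambda>t. W t k)"
    and far: "\<And>t k. t \<in> {0..T} \<Longrightarrow> N \<le> k \<Longrightarrow> W t k < 0"
    and init: "\<And>k. W 0 k < 0"
    and t0: "t0 \<in> {0..T}" and touch: "0 \<le> W t0 k0"
  obtains ts ks where "ts \<in> {0<..T}" "W ts ks = 0" "\<And>j. W ts j \<le> 0"
    "\<And>t k. 0 \<le> t \<Longrightarrow> t < ts \<Longrightarrow> W t k < 0"
proof -
  define S where "S = {t\<in>{0..T}. \<exists>k<N. 0 \<le> W t k}"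
  have "k0 < N"
    using far[OF t0, of k0] touch by (meson not_le)
  then have "t0 \<in> S"
    using t0 touch unfolding S_def by auto
  then have S_ne: "S \<noteq> {}" by auto
  have "S = (\<Union>k<N. {0..T} \<inter> (\<lambda>t. W t k) -` {0..})"
    unfolding S_def by auto
  also have "closed \<dots>"
    by (intro closed_UN ballI continuous_closed_preimage cont) auto
  finally have "closed S" .
  moreover have S_bdd: "bdd_below S"
    unfolding S_def by (auto intro: bdd_belowI[of _ 0])
  ultimately have "Inf S \<in> S"
    using closed_contains_Inf S_ne by blast
  then obtain ks where ts: "Inf S \<in> {0..T}" and ks: "0 \<le> W (Inf S) ks"
    unfolding S_def by auto
  have before: "W t k < 0" if "0 \<le> t" "t < Inf S" for t k
  proof -
    have "t \<notin> S"
      using cInf_lower[OF _ S_bdd, of t] that by auto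
    moreover have "t \<le> T" using that ts by auto
    ultimately show ?thesis
      using far[of t k] that unfolding S_def by (cases "k < N") auto
  qed
  have ts_pos: "0 < Inf S"
    using ts ks init[of ks] by (cases "Inf S = 0") auto
  have nonpos: "W (Inf S) j \<le> 0" for j
  proof (rule ccontr)
    assume "\<not> W (Inf S) j \<le> 0"
    then obtain \<delta> where "\<delta> > 0" and near:
      "\<forall>t\<in>{0..T}. dist t (Inf S) < \<delta> \<longrightarrow> dist (W t j) (W (Inf S) j) < W (Inf S) j"
      using cont[of j] ts unfolding continuous_on_iff by (metis not_le)
    define t1 where "t1 = max 0 (Inf S - \<delta> / 2)"
    have "0 \<le> t1" "t1 < Inf S" "t1 \<in> {0..T}" "dist t1 (Inf S) < \<delta>"
      unfolding t1_def using ts_pos \<open>\<delta> > 0\<close> ts by (auto simp: dist_real_def)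
    then show False
      using near before[of t1 j] by (force simp: dist_real_def)
  qed
  show thesis
  proof
    show "Inf S \<in> {0<..T}" using ts ts_pos by auto
    show "W (Inf S) ks = 0" using ks nonpos[of ks] by simp
  qed (use nonpos before in auto)
qed

lemma semidiscrete_strict_max_principle:
  fixes W D :: "real \<Rightarrow> nat \<Rightarrow> real"
  assumes cont: "\<And>k. continuous_on {0..T} (\<lambda>t. W t k)"
    and far: "\<And>t k. t \<in> {0..T} \<Longrightarrow> N \<le> k \<Longrightarrow> W t k < 0"
    and init: "\<And>k. W 0 k < 0"
    and bdry: "\<And>t. t \<in> {0..T} \<Longrightarrow> W t 0 < 0"
    and der: "\<And>t k. t \<in> {0<..T} \<Longrightarrow> 1 \<le> k \<Longrightarrow>
      ((\<lambda>\<tau>. W \<tau> k) has_real_derivative D t k) (at t within {0..T})"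
    and touching: "\<And>t k. t \<in> {0<..T} \<Longrightarrow> 1 \<le> k \<Longrightarrow> W t k = 0 \<Longrightarrow> (\<And>j. W t j \<le> 0) \<Longrightarrow>
      D t k < 0"
    and t: "t \<in> {0..T}"
  shows "W t k < 0"
proof (rule ccontr)
  assume "\<not> W t k < 0"
  then have "0 \<le> W t k" by simp
  then obtain ts ks where ts: "ts \<in> {0<..T}" and zero: "W ts ks = 0"
    and nonpos: "\<And>j. W ts j \<le> 0" and before: "\<And>\<tau> j. 0 \<le> \<tau> \<Longrightarrow> \<tau> < ts \<Longrightarrow> W \<tau> j < 0"
    using first_touching_time[of T W N t k, OF cont far init t] by blast
  have ks: "1 \<le> ks"
    using zero bdry[of ts] ts by (cases ks) auto
  have "0 \<le> D ts ks"
    using ts zero before[of _ ks]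
    by (intro has_real_derivative_nonneg_at_left_max[OF _ _ der[OF ts ks]])
      (auto intro: less_imp_le)
  then show False
    using touching[OF ts ks zero nonpos] by simp
qed

text \<open>Penalisation argument: \<open>W = w - \<epsilon> (1 + t + \<beta> k)\<close> is negative for large \<open>k\<close>
  because \<open>w\<close> is bounded above, and its time derivative at a touching point is at most
  \<open>A \<epsilon> \<beta> - \<epsilon> < 0\<close>, the spatial terms contributing at most \<open>A \<epsilon> \<beta>\<close>.\<close>

lemma semidiscrete_max_principle:
  fixes w d a c :: "real \<Rightarrow> nat \<Rightarrow> real"
  assumes T: "0 < T"
    and bdd: "\<And>t k. t \<in> {0..T} \<Longrightarrow> w t k \<le> M"
    and cont: "\<And>k. continuous_on {0..T} (\<lambda>t. w t k)"
    and init: "\<And>k. 1 \<le> k \<Longrightarrow> w 0 k \<le> 0"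
    and bdry: "\<And>t. t \<in> {0..T} \<Longrightarrow> w t 0 \<le> 0"
    and der: "\<And>t k. t \<in> {0<..T} \<Longrightarrow> 1 \<le> k \<Longrightarrow>
      ((\<lambda>\<tau>. w \<tau> k) has_real_derivative d t k) (at t within {0..T})"
    and ineq: "\<And>t k. t \<in> {0<..T} \<Longrightarrow> 1 \<le> k \<Longrightarrow> 0 < w t k \<Longrightarrow>
      d t k \<le> a t k * (w t (Suc k) - w t k) + c t k * (w t (k - 1) - w t k)"
    and coef: "\<And>t k. t \<in> {0<..T} \<Longrightarrow> 1 \<le> k \<Longrightarrow> 0 \<le> a t k \<and> a t k \<le> A \<and> 0 \<le> c t k"
    and t: "t \<in> {0..T}"
  shows "w t k \<le> 0"
proof (rule ccontr)
  assume "\<not> w t k \<le> 0"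
  have "0 \<le> A" using coef[of T 1] T by auto
  define \<beta> where "\<beta> = 1 / (A + 1)"
  have \<beta>: "0 < \<beta>" "\<beta> * A < 1"
    unfolding \<beta>_def using \<open>0 \<le> A\<close> by (auto simp: field_simps)
  define \<epsilon> where "\<epsilon> = w t k / (1 + T + \<beta> * k)"
  have "0 < 1 + T + \<beta> * k"
    using T \<beta> by (simp add: add_pos_nonneg)
  then have \<epsilon>: "0 < \<epsilon>"
    unfolding \<epsilon>_def using \<open>\<not> w t k \<le> 0\<close> by simp
  define W where "W \<tau> j = w \<tau> j - \<epsilon> * (1 + \<tau> + \<beta> * j)" for \<tau> j
  have penalty_pos: "0 < \<epsilon> * (1 + \<tau> + \<beta> * j)" if "0 \<le> \<tau>" for \<tau> and j :: nat
    using that \<epsilon> \<beta> by (intro mult_pos_pos add_pos_nonneg) simp_all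
  obtain N :: nat where N: "M / (\<epsilon> * \<beta>) < N"
    using reals_Archimedean2 by blast
  have "W t k < 0"
  proof (rule semidiscrete_strict_max_principle[where W = W and T = T and N = N and D = "\<lambda>\<tau> j. d \<tau> j - \<epsilon>"])
    show "W \<tau> j < 0" if "\<tau> \<in> {0..T}" "N \<le> j" for \<tau> j
    proof -
      have "M < \<epsilon> * \<beta> * N" using N \<epsilon> \<beta> by (simp add: field_simps)
      also have "\<dots> \<le> \<epsilon> * \<beta> * j" using that \<epsilon> \<beta> by simp
      finally have "M < \<epsilon> * \<beta> * j" .
      moreover have "0 \<le> \<epsilon> * \<tau>" using that \<epsilon> by simp
      moreover have "\<epsilon> * (1 + \<tau> + \<beta> * j) = \<epsilon> + \<epsilon> * \<tau> + \<epsilon> * \<beta> * j"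
        by (simp add: algebra_simps)
      ultimately show ?thesis
        using bdd[of \<tau> j] that \<epsilon> unfolding W_def by linarith
    qed
    show W_bdry: "W \<tau> 0 < 0" if "\<tau> \<in> {0..T}" for \<tau>
      using bdry[OF that] penalty_pos[of \<tau> 0] that unfolding W_def by simp
    show "W 0 j < 0" for j
      using init[of j] W_bdry[of 0] penalty_pos[of 0 j] T unfolding W_def
      by (cases "j = 0") auto
    show "continuous_on {0..T} (\<lambda>\<tau>. W \<tau> j)" for j
      unfolding W_def by (intro continuous_intros cont)
    show "((\<lambda>\<tau>. W \<tau> j) has_real_derivative d \<tau> j - \<epsilon>) (at \<tau> within {0..T})"
      if "\<tau> \<in> {0<..T}" "1 \<le> j" for \<tau> j
      unfolding W_def using der[OF that] by (auto intro!: derivative_eq_intros)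
    show "d \<tau> j - \<epsilon> < 0"
      if ts: "\<tau> \<in> {0<..T}" and j: "1 \<le> j" and zero: "W \<tau> j = 0" and nonpos: "\<And>i. W \<tau> i \<le> 0"
      for \<tau> j
    proof -
      have "d \<tau> j \<le> a \<tau> j * (w \<tau> (Suc j) - w \<tau> j) + c \<tau> j * (w \<tau> (j - 1) - w \<tau> j)"
        using ineq[OF ts j] zero penalty_pos[of \<tau> j] ts unfolding W_def by simp
      also have "\<dots> = a \<tau> j * (W \<tau> (Suc j) + \<epsilon> * \<beta>) + c \<tau> j * (W \<tau> (j - 1) - \<epsilon> * \<beta>)"
        using zero j unfolding W_def by (simp add: algebra_simps of_nat_diff)
      also have "\<dots> \<le> a \<tau> j * (\<epsilon> * \<beta>) + c \<tau> j * 0"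
        using coef[OF ts j] nonpos[of "Suc j"] nonpos[of "j - 1"] mult_pos_pos[OF \<epsilon> \<beta>(1)]
        by (intro add_mono mult_left_mono) auto
      also have "\<dots> \<le> A * \<beta> * \<epsilon>"
        using coef[OF ts j] \<epsilon> \<beta> by (simp add: mult_right_mono)
      also have "\<dots> < \<epsilon>"
        using \<beta> \<epsilon> by (simp add: mult.commute)
      finally show ?thesis by simp
    qed
  qed (use t in simp)
  moreover have "\<epsilon> * (1 + t + \<beta> * k) \<le> \<epsilon> * (1 + T + \<beta> * k)"
    using t \<epsilon> by simp
  moreover have "\<epsilon> * (1 + T + \<beta> * k) = w t k"
    unfolding \<epsilon>_def using \<open>0 < 1 + T + \<beta> * k\<close> by simp
  ultimately show False
    unfolding W_def by simp
qed

lemma semidiscrete_invariant_interval: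
  fixes w a c z :: "real \<Rightarrow> nat \<Rightarrow> real"
  assumes T: "0 < T"
    and bdd: "\<exists>M. \<forall>t\<in>{0..T}. \<forall>k. \<bar>w t k\<bar> \<le> M"
    and cont: "\<And>k. continuous_on {0..T} (\<lambda>t. w t k)"
    and init: "\<And>k. 1 \<le> k \<Longrightarrow> w 0 k \<in> {lo..hi}"
    and bdry: "\<And>t. t \<in> {0..T} \<Longrightarrow> w t 0 \<in> {lo..hi}"
    and der: "\<And>t k. t \<in> {0<..T} \<Longrightarrow> 1 \<le> k \<Longrightarrow> ((\<lambda>\<tau>. w \<tau> k) has_real_derivative
      a t k * (w t (Suc k) - w t k) + c t k * (w t (k - 1) - w t k) + z t k) (at t within {0..T})"
    and z: "\<And>t k. t \<in> {0<..T} \<Longrightarrow> 1 \<le> k \<Longrightarrow>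
      (hi < w t k \<longrightarrow> z t k \<le> 0) \<and> (w t k < lo \<longrightarrow> 0 \<le> z t k)"
    and coef: "\<And>t k. t \<in> {0<..T} \<Longrightarrow> 1 \<le> k \<Longrightarrow> 0 \<le> a t k \<and> a t k \<le> A \<and> 0 \<le> c t k"
    and t: "t \<in> {0..T}"
  shows "w t k \<in> {lo..hi}"
proof -
  obtain M where M: "\<And>t k. t \<in> {0..T} \<Longrightarrow> \<bar>w t k\<bar> \<le> M"
    using bdd by blast
  have "w t k - hi \<le> 0"
  proof (rule semidiscrete_max_principle[where w = "\<lambda>t k. w t k - hi" and M = "M - hi" and A = A
        and d = "\<lambda>t k. a t k * (w t (Suc k) - w t k) + c t k * (w t (k - 1) - w t k) + z t k"])
    show "((\<lambda>\<tau>. w \<tau> k - hi) has_real_derivative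
        a t k * (w t (Suc k) - w t k) + c t k * (w t (k - 1) - w t k) + z t k) (at t within {0..T})"
      if "t \<in> {0<..T}" "1 \<le> k" for t k
      using der[OF that] by (auto intro!: derivative_eq_intros)
    show "w t k - hi \<le> M - hi" if "t \<in> {0..T}" for t k
      using M[OF that, of k] by simp
    show "a t k * (w t (Suc k) - w t k) + c t k * (w t (k - 1) - w t k) + z t k
        \<le> a t k * ((w t (Suc k) - hi) - (w t k - hi)) + c t k * ((w t (k - 1) - hi) - (w t k - hi))"
      if "t \<in> {0<..T}" "1 \<le> k" "0 < w t k - hi" for t k
      using z[OF that(1,2)] that(3) by simp
  qed (use T cont init bdry coef t in \<open>auto intro: continuous_intros\<close>)
  moreover have "lo - w t k \<le> 0"
  proof (rule semidiscrete_max_principle[where w = "\<lambda>t k. lo - w t k" and M = "M + lo" and A = A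
        and d = "\<lambda>t k. - (a t k * (w t (Suc k) - w t k) + c t k * (w t (k - 1) - w t k) + z t k)"])
    show "((\<lambda>\<tau>. lo - w \<tau> k) has_real_derivative
        - (a t k * (w t (Suc k) - w t k) + c t k * (w t (k - 1) - w t k) + z t k)) (at t within {0..T})"
      if "t \<in> {0<..T}" "1 \<le> k" for t k
      using der[OF that] by (auto intro!: derivative_eq_intros)
    show "lo - w t k \<le> M + lo" if "t \<in> {0..T}" for t k
      using M[OF that, of k] by simp
    show "- (a t k * (w t (Suc k) - w t k) + c t k * (w t (k - 1) - w t k) + z t k)
        \<le> a t k * ((lo - w t (Suc k)) - (lo - w t k)) + c t k * ((lo - w t (k - 1)) - (lo - w t k))"
      if "t \<in> {0<..T}" "1 \<le> k" "0 < lo - w t k" for t k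
      using z[OF that(1,2)] that(3) by (simp add: algebra_simps)
  qed (use T cont init bdry coef t in \<open>auto intro: continuous_intros\<close>)
  ultimately show ?thesis by simp
qed

lemma Lap_eq_neighbour_diffs:
  assumes "h \<noteq> 0"
  shows "Lap h v k = 1 / h\<^sup>2 * (v (Suc k) - v k) + 1 / h\<^sup>2 * (v (k - 1) - v k)"
  using assms unfolding Lap_def Dplus_def Dminus_def by (simp add: field_simps power2_eq_square)

definition neighbour_weight :: "real \<Rightarrow> real \<Rightarrow> (nat \<Rightarrow> real) \<Rightarrow> nat \<Rightarrow> nat \<Rightarrow> real" where
  "neighbour_weight h B G k i = (2 + B * G k + B * G i) / (2 * (1 + B * G k) * h\<^sup>2)"

lemma Lap_drift_eq_neighbour_diffs:
  assumes "h \<noteq> 0" "1 + B * G k \<noteq> 0"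
  shows "Lap h v k + bcoef B (G k) * (Dplus h G k * Dplus h v k + Dminus h G k * Dminus h v k) =
    neighbour_weight h B G k (Suc k) * (v (Suc k) - v k)
    + neighbour_weight h B G k (k - 1) * (v (k - 1) - v k)"
proof -
  have identity: "((x - y) / h - (y - z) / h) / h
      + B / (2 * D) * ((gp - g) / h * ((x - y) / h) + (g - gm) / h * ((y - z) / h))
    = (2 * D + B * (gp - g)) / (2 * D * h\<^sup>2) * (x - y)
      + (2 * D - B * (g - gm)) / (2 * D * h\<^sup>2) * (z - y)" if "D \<noteq> 0" for x y z g gp gm D
    using that assms(1) by (simp add: field_simps power2_eq_square)
  have numerators: "2 * (1 + B * G k) + B * (G (Suc k) - G k) = 2 + B * G k + B * G (Suc k)"
    "2 * (1 + B * G k) - B * (G k - G (k - 1)) = 2 + B * G k + B * G (k - 1)"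
    by algebra+
  show ?thesis
    using identity[where x = "v (Suc k)" and y = "v k" and z = "v (k - 1)"
        and g = "G k" and gp = "G (Suc k)" and gm = "G (k - 1)", OF assms(2), unfolded numerators]
    unfolding Lap_def Dplus_def Dminus_def bcoef_def neighbour_weight_def by simp
qed

lemma neighbour_weight_bounds:
  assumes h: "0 < h" and m: "0 < m" "m \<le> 1 + B * G k" "m \<le> 1 + B * G i"
    and C: "\<bar>B * G k\<bar> \<le> C" "\<bar>B * G i\<bar> \<le> C"
  shows "0 \<le> neighbour_weight h B G k i" and "neighbour_weight h B G k i \<le> (1 + C) / (m * h\<^sup>2)"
proof -
  have den: "0 < 2 * m * h\<^sup>2" "2 * m * h\<^sup>2 \<le> 2 * (1 + B * G k) * h\<^sup>2"
    using h m by simp_all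
  show "0 \<le> neighbour_weight h B G k i"
    unfolding neighbour_weight_def using den m by simp
  have "neighbour_weight h B G k i \<le> (2 + 2 * C) / (2 * m * h\<^sup>2)"
    unfolding neighbour_weight_def by (rule frac_le) (use den m C in auto)
  also have "\<dots> = (1 + C) / (m * h\<^sup>2)"
    using h m by (simp add: field_simps)
  finally show "neighbour_weight h B G k i \<le> (1 + C) / (m * h\<^sup>2)" .
qed

lemma gcoef_bounds:
  assumes c0: "0 < c0 k" and phi: "0 \<le> 1 + B * c0 k" and lam: "0 \<le> lam"
    and f: "\<And>\<tau>. \<tau> \<in> {0..t} \<Longrightarrow> 0 \<le> f \<tau> k"
  shows "0 < gcoef B lam c0 f t k" and "gcoef B lam c0 f t k \<le> c0 k"
    and "min 1 (1 + B * c0 k) \<le> 1 + B * gcoef B lam c0 f t k"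
proof -
  define I where "I = integral {0..t} (\<lambda>\<tau>. f \<tau> k)"
  have "0 \<le> I"
  proof (cases "(\<lambda>\<tau>. f \<tau> k) integrable_on {0..t}")
    case True
    then show ?thesis unfolding I_def using f by (rule integral_nonneg)
  next
    case False
    then show ?thesis unfolding I_def by (simp add: not_integrable_integral)
  qed
  then have "1 \<le> exp (lam * I)"
    using lam by simp
  then have "0 \<le> (1 + B * c0 k) * (exp (lam * I) - 1)"
    using phi by simp
  then have den: "1 \<le> (1 + B * c0 k) * exp (lam * I) - B * c0 k"
    by (simp add: algebra_simps)
  have g: "gcoef B lam c0 f t k = c0 k / ((1 + B * c0 k) * exp (lam * I) - B * c0 k)"
    unfolding gcoef_def I_def ..
  show pos: "0 < gcoef B lam c0 f t k"
    unfolding g using c0 den by simp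
  show le: "gcoef B lam c0 f t k \<le> c0 k"
    unfolding g using c0 den by (simp add: divide_le_eq)
  show "min 1 (1 + B * c0 k) \<le> 1 + B * gcoef B lam c0 f t k"
  proof (cases "0 \<le> B")
    case True
    then have "0 \<le> B * gcoef B lam c0 f t k"
      using pos by simp
    then show ?thesis by simp
  next
    case False
    then have "B * c0 k \<le> B * gcoef B lam c0 f t k"
      using le by (simp add: mult_left_mono_neg)
    then show ?thesis by simp
  qed
qed

lemma heat_solution_bounds:
  assumes h: "0 < h" and T: "0 < T" and eta: "0 \<le> \<eta>"
    and psi: "\<forall>t\<in>{0..T}. 0 \<le> \<psi> t \<and> \<psi> t \<le> \<eta>"
    and heat: "is_heat_solution h T \<psi> u"
    and t: "t \<in> {0..T}"
  shows "u t k \<in> {0..\<eta>}"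
proof (rule semidiscrete_invariant_interval[where w = u and T = T
      and a = "\<lambda>_ _. 1 / h\<^sup>2" and c = "\<lambda>_ _. 1 / h\<^sup>2" and z = "\<lambda>_ _. 0" and A = "1 / h\<^sup>2"])
  show "((\<lambda>\<tau>. u \<tau> k) has_real_derivative
      1 / h\<^sup>2 * (u t (Suc k) - u t k) + 1 / h\<^sup>2 * (u t (k - 1) - u t k) + 0) (at t within {0..T})"
    if "t \<in> {0<..T}" "1 \<le> k" for t k
  proof -
    have "((\<lambda>\<tau>. u \<tau> k) has_real_derivative Lap h (u t) k) (at t within {0..T})"
      using heat that unfolding is_heat_solution_def by blast
    then show ?thesis
      using Lap_eq_neighbour_diffs[of h "u t" k] h by simp
  qed
qed (use T eta psi heat t in \<open>auto simp: is_heat_solution_def\<close>)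

lemma lin_solution_bounds:
  assumes h: "0 < h" and T: "0 < T" and eta: "0 \<le> \<eta>" and lam: "0 \<le> lam"
    and psi: "\<forall>t\<in>{0..T}. 0 \<le> \<psi> t \<and> \<psi> t \<le> \<eta>"
    and s0: "\<forall>k. 0 \<le> s0 k \<and> s0 k \<le> \<eta>"
    and c0: "\<forall>k. 0 < c0 k \<and> c0 k \<le> C0"
    and phi: "0 < \<phi>min" "\<forall>k. \<phi>min \<le> 1 + B * c0 k"
    and f: "\<forall>t\<in>{0..T}. \<forall>k. 0 \<le> f t k \<and> B * f t k \<le> 1"
    and sol: "is_lin_solution h T B lam c0 f \<psi> s0 s"
    and t: "t \<in> {0..T}"
  shows "s t k \<in> {0..\<eta>}"
proof -
  define g where "g = gcoef B lam c0 f"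
  define m where "m = min 1 \<phi>min"
  have m: "0 < m" unfolding m_def using phi by simp
  have g: "0 < g \<tau> j" "g \<tau> j \<le> C0" "m \<le> 1 + B * g \<tau> j" if "\<tau> \<in> {0..T}" for \<tau> j
  proof -
    have "0 < c0 j" "0 \<le> 1 + B * c0 j" "\<And>\<sigma>. \<sigma> \<in> {0..\<tau>} \<Longrightarrow> 0 \<le> f \<sigma> j"
      using c0 phi f that by (auto intro: order_trans[of 0 \<phi>min])
    note bounds = gcoef_bounds[of c0 j B lam \<tau> f, OF this(1,2) lam this(3)]
    have "m \<le> min 1 (1 + B * c0 j)"
      unfolding m_def using phi(2)[rule_format, of j] by (simp add: min.coboundedI2)
    then show "0 < g \<tau> j" "g \<tau> j \<le> C0" "m \<le> 1 + B * g \<tau> j"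
      using bounds c0 unfolding g_def by (auto intro: order_trans)
  qed
  define a where "a \<tau> j = neighbour_weight h B (g \<tau>) j (Suc j)" for \<tau> j
  define c where "c \<tau> j = neighbour_weight h B (g \<tau>) j (j - 1)" for \<tau> j
  have Bg: "\<bar>B * g \<tau> j\<bar> \<le> \<bar>B\<bar> * C0" if "\<tau> \<in> {0..T}" for \<tau> j
    using g[OF that, of j] by (simp add: abs_mult mult_left_mono)
  have coef: "0 \<le> a \<tau> j \<and> a \<tau> j \<le> (1 + \<bar>B\<bar> * C0) / (m * h\<^sup>2) \<and> 0 \<le> c \<tau> j"
    if "\<tau> \<in> {0<..T}" for \<tau> j
    using neighbour_weight_bounds[OF h m g(3) g(3) Bg Bg] that unfolding a_def c_def by auto
  show ?thesis
  proof (rule semidiscrete_invariant_interval[where w = s and T = T and a = a and c = c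
        and A = "(1 + \<bar>B\<bar> * C0) / (m * h\<^sup>2)"
        and z = "\<lambda>\<tau> j. lam * g \<tau> j * s \<tau> j * (B * f \<tau> j - 1)"])
    show "((\<lambda>\<tau>. s \<tau> j) has_real_derivative a \<tau> j * (s \<tau> (Suc j) - s \<tau> j)
        + c \<tau> j * (s \<tau> (j - 1) - s \<tau> j) + lam * g \<tau> j * s \<tau> j * (B * f \<tau> j - 1)) (at \<tau> within {0..T})"
      if "\<tau> \<in> {0<..T}" "1 \<le> j" for \<tau> j
    proof -
      have "((\<lambda>\<tau>. s \<tau> j) has_real_derivative Lap h (s \<tau>) j
          + bcoef B (g \<tau> j) * (Dplus h (g \<tau>) j * Dplus h (s \<tau>) j + Dminus h (g \<tau>) j * Dminus h (s \<tau>) j)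
          + lam * g \<tau> j * s \<tau> j * (B * f \<tau> j - 1)) (at \<tau> within {0..T})"
        using sol that unfolding is_lin_solution_def Let_def g_def by blast
      moreover have "1 + B * g \<tau> j \<noteq> 0"
        using g(3)[of \<tau> j] m that by auto
      ultimately show ?thesis
        using Lap_drift_eq_neighbour_diffs[of h B "g \<tau>" j "s \<tau>"] h
        unfolding a_def c_def by simp
    qed
    show "(\<eta> < s \<tau> j \<longrightarrow> lam * g \<tau> j * s \<tau> j * (B * f \<tau> j - 1) \<le> 0) \<and>
        (s \<tau> j < 0 \<longrightarrow> 0 \<le> lam * g \<tau> j * s \<tau> j * (B * f \<tau> j - 1))"
      if "\<tau> \<in> {0<..T}" "1 \<le> j" for \<tau> j
    proof -
      have "B * f \<tau> j - 1 \<le> 0" "0 \<le> lam * g \<tau> j"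
        using f g(1)[of \<tau> j] lam that by auto
      then show ?thesis
        using eta by (auto simp: mult_nonneg_nonpos mult_nonpos_nonpos mult_nonneg_nonneg
            mult_nonneg_nonpos2 less_imp_le)
    qed
  qed (use T psi s0 sol t coef in \<open>auto simp: is_lin_solution_def Let_def\<close>)
qed

theorem mainTheorem8:
  fixes h T \<eta> lam B \<beta> K cm C0 \<phi>min \<phi>max :: real
    and \<psi> :: "real \<Rightarrow> real"
    and s0 c0 :: "nat \<Rightarrow> real"
    and f s u :: "real \<Rightarrow> nat \<Rightarrow> real"
  assumes h: "h > 0" and T: "T > 0" and eta: "\<eta> > 0" and lam: "lam > 0"
    and B: "B = -1 \<or> B = 1"
    and beta: "1/4 < \<beta>" "\<beta> < 1/2"
    and psi_holder: "holder_on \<beta> {0..T} \<psi>"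
    and psi_bounds: "\<forall>t\<in>{0..T}. 0 \<le> \<psi> t \<and> \<psi> t \<le> \<eta>"
    and psi0: "\<psi> 0 = 0"
    and s0_bounds: "\<forall>k. 0 \<le> s0 k \<and> s0 k \<le> \<eta>"
    and s00: "s0 0 = 0"
    and s0_L2: "l2sq h s0 < \<infinity>" "l2sq h (Dplus h s0) < \<infinity>"
    and cm: "0 < cm"
    and c0_bounds: "\<forall>k. cm \<le> c0 k \<and> c0 k \<le> C0"
    and c0_L2: "l2sq h (\<lambda>k. C0 - c0 k) < \<infinity>" "l2sq h (Dplus h c0) < \<infinity>"
    and phi: "0 < \<phi>min" "\<forall>c\<in>{0..C0}. \<phi>min \<le> 1 + B * c \<and> 1 + B * c \<le> \<phi>max"
    and B1: "B = 1 \<Longrightarrow> \<eta> < 1"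
    and F: "condF h T \<eta> K \<psi> f"
    and sol: "is_lin_solution h T B lam c0 f \<psi> s0 s"
    and heat: "is_heat_solution h T \<psi> u"
  shows "\<forall>t\<in>{0..T}. \<forall>k\<ge>1. \<bar>s t k - u t k\<bar> \<le> 2 * \<eta>"
proof (intro ballI allI impI)
  fix t k assume t: "t \<in> {0..T}"
  have f: "\<forall>t\<in>{0..T}. \<forall>k. 0 \<le> f t k \<and> f t k \<le> \<eta>"
    using F unfolding condF_def by blast
  have "B * f \<tau> j \<le> 1" if "\<tau> \<in> {0..T}" for \<tau> j
    using f[rule_format, OF that, of j] B B1 by (cases "B = 1") auto
  then have Bf: "\<forall>t\<in>{0..T}. \<forall>k. 0 \<le> f t k \<and> B * f t k \<le> 1"
    using f by blast
  have c0: "\<forall>k. 0 < c0 k \<and> c0 k \<le> C0"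
    using c0_bounds cm by (auto intro: less_le_trans)
  have "\<forall>k. \<phi>min \<le> 1 + B * c0 k"
    using phi(2) c0 by (simp add: less_imp_le)
  from lin_solution_bounds[OF h T less_imp_le[OF eta] less_imp_le[OF lam] psi_bounds s0_bounds
      c0 phi(1) this Bf sol t]
  have "s t k \<in> {0..\<eta>}" .
  moreover have "u t k \<in> {0..\<eta>}"
    using heat_solution_bounds[OF h T less_imp_le[OF eta] psi_bounds heat t] .
  ultimately show "\<bar>s t k - u t k\<bar> \<le> 2 * \<eta>"
    by auto
qed

end
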